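(* Let $p,n\in\mathbb N$ with $p\ge n\ge 5$ and $n-1\nmid p$. Then $$\frac{(n-2)p}{2}-\frac{(n-1)^2}{8}\le ex(p;T_n^1)\le \frac{(n-2)(p-1)}{2}.$$
   Context: All graphs are finite and simple; a graph "contains" $H$ if it has a subgraph isomorphic to $H$. For a graph $L$ and $p\in\mathbb N$, $ex(p;L)$ is the maximum number of edges in a graph on $p$ vertices containing no copy of $L$. For $n\ge 5$, $T_n^1$ is the tree with vertex set $\{v_0,\ldots,v_{n-1}\}$ and edge set $\{v_0v_1,\ldots,v_0v_{n-3},\,v_{n-4}v_{n-2},\,v_{n-3}v_{n-1}\}$. *)

theory Defs
  imports Complex_Main
begin

definition simple_graph_on :: "'a set \<Rightarrow> 'a set set \<Rightarrow> bool" where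
  "simple_graph_on V E \<longleftrightarrow> finite V \<and> (\<forall>e\<in>E. e \<subseteq> V \<and> card e = 2)"

text \<open>A pattern graph L is given on vertex set {0..<k} by its edge set LE.\<close>
definition contains_graph :: "'a set \<Rightarrow> 'a set set \<Rightarrow> nat \<Rightarrow> nat set set \<Rightarrow> bool" where
  "contains_graph V E k LE \<longleftrightarrow>
     (\<exists>f. inj_on f {0..<k} \<and> f ` {0..<k} \<subseteq> V \<and> (\<forall>e\<in>LE. f ` e \<in> E))"

text \<open>ex(p;L): maximum number of edges of an L-free graph on p vertices
  (vertex set {0..<p}, w.l.o.g. up to isomorphism).\<close>
definition ex_num :: "nat \<Rightarrow> nat \<Rightarrow> nat set set \<Rightarrow> nat" where
  "ex_num p k LE = Max {card E | E. simple_graph_on {0..<p} E \<and> \<not> contains_graph {0..<p} E k LE}"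

text \<open>The tree T_n^1 on vertices v_0..v_{n-1} (vertex v_i is i).\<close>
definition T1_edges :: "nat \<Rightarrow> nat set set" where
  "T1_edges n = {{0, i} | i. 1 \<le> i \<and> i \<le> n - 3} \<union> {{n - 4, n - 2}, {n - 3, n - 1}}"

end

theory Submission
  imports Defs
begin

text \<open>
  We prove by strong induction on \<open>|V|\<close> that every \<open>T_n^1\<close>-free simple graph
  satisfies \<open>2|E| \<le> (n - 2)|V|\<close>, and even \<open>2|E| + (n - 2) \<le> (n - 2)|V|\<close> when \<open>n - 1\<close> does not divide \<open>|V|\<close>
  (predicate \<open>T1_bound\<close>). Let \<open>v\<close> be a vertex of maximum degree.
  (1) If \<open>deg v \<ge> n - 1\<close>, a nonempty set around \<open>v\<close> meets few edges and is peeled off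
      (an intersecting-family argument for \<open>n \<ge> 6\<close>, a path analysis for \<open>n = 5\<close>).
  (2) If the graph is disconnected, the bound is additive over the components.
  (3) Otherwise all degrees are \<open>\<le> n - 2\<close>, and a degree count around a vertex of
      degree \<open>n - 2\<close> with an edge leaving its closed neighbourhood gives the bound.

  Disjoint cliques on the blocks \<open>{k*m..<k*m+k}\<close>, \<open>k = n - 1\<close>, contain no
  connected graph on \<open>n\<close> vertices; counting their edges gives the lower bound.
\<close>

definition neighbours :: "'a set set \<Rightarrow> 'a \<Rightarrow> 'a set" where
  "neighbours E x = {y. {x,y} \<in> E}"

lemma edge_endpoints:
  assumes "simple_graph_on V E" "{x,y} \<in> E"
  shows "x \<in> V" "y \<in> V" "x \<noteq> y"
  using assms unfolding simple_graph_on_def by auto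

lemma neighbour_edge: "y \<in> neighbours E x \<Longrightarrow> {x,y} \<in> E"
  unfolding neighbours_def by simp

lemma neighbours_sym:
  "simple_graph_on V E \<Longrightarrow> x \<in> neighbours E y \<longleftrightarrow> y \<in> neighbours E x"
  unfolding neighbours_def by (simp add: insert_commute)

lemma neighbour_sym: "simple_graph_on V E \<Longrightarrow> x \<in> neighbours E y \<Longrightarrow> y \<in> neighbours E x"
  using neighbours_sym by metis

lemma neighbours_subset: "simple_graph_on V E \<Longrightarrow> neighbours E x \<subseteq> V"
  unfolding neighbours_def using edge_endpoints(2)[of V E x] by blast

lemma finite_neighbours: "simple_graph_on V E \<Longrightarrow> finite (neighbours E x)"
  using neighbours_subset[of V E x] unfolding simple_graph_on_def by (auto intro: finite_subset)

lemma not_own_neighbour: "simple_graph_on V E \<Longrightarrow> x \<notin> neighbours E x"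
  unfolding neighbours_def using edge_endpoints(3)[of V E x x] by blast

lemma neighbours_outside: "simple_graph_on V E \<Longrightarrow> x \<notin> V \<Longrightarrow> neighbours E x = {}"
  unfolding neighbours_def using edge_endpoints(1)[of V E x] by blast

lemma finite_edges: "simple_graph_on V E \<Longrightarrow> finite E"
  unfolding simple_graph_on_def by (meson Pow_iff finite_Pow_iff finite_subset subsetI)

lemma edge_doubleton: "simple_graph_on V E \<Longrightarrow> e \<in> E \<Longrightarrow> \<exists>x y. e = {x,y} \<and> x \<noteq> y"
  unfolding simple_graph_on_def by (metis card_2_iff)

lemma edge_through:
  assumes "simple_graph_on V E" "e \<in> E" "x \<in> e"
  obtains y where "e = {x,y}" "y \<in> neighbours E x"
proof -
  obtain a b where "e = {a,b}" using edge_doubleton[OF assms(1,2)] by blast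
  then have "e = {x, if a = x then b else a}" using assms(3) by auto
  then show ?thesis using that assms(2) unfolding neighbours_def by auto
qed

lemma degree_eq_card_neighbours:
  assumes G: "simple_graph_on V E"
  shows "card {e\<in>E. x \<in> e} = card (neighbours E x)"
proof -
  have "bij_betw (\<lambda>y. {x,y}) (neighbours E x) {e\<in>E. x \<in> e}"
  proof (rule bij_betw_imageI)
    show "inj_on (\<lambda>y. {x,y}) (neighbours E x)" by (auto simp: inj_on_def doubleton_eq_iff)
    show "(\<lambda>y. {x,y}) ` neighbours E x = {e\<in>E. x \<in> e}"
    proof
      show "(\<lambda>y. {x,y}) ` neighbours E x \<subseteq> {e\<in>E. x \<in> e}" by (auto simp: neighbours_def)
      show "{e\<in>E. x \<in> e} \<subseteq> (\<lambda>y. {x,y}) ` neighbours E x"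
      proof
        fix e assume "e \<in> {e\<in>E. x \<in> e}"
        then have "e \<in> E" "x \<in> e" by auto
        then obtain y where "e = {x,y}" "y \<in> neighbours E x" by (rule edge_through[OF G])
        then show "e \<in> (\<lambda>y. {x,y}) ` neighbours E x" by blast
      qed
    qed
  qed
  then show ?thesis by (simp add: bij_betw_same_card)
qed

lemma double_counting:
  assumes "finite A" "finite F" "\<forall>e\<in>F. e \<subseteq> A \<and> card e = 2"
  shows "(\<Sum>x\<in>A. card {e\<in>F. x \<in> e}) = 2 * card F"
proof -
  have "(\<Sum>x\<in>A. card {e\<in>F. x \<in> e}) = (\<Sum>x\<in>A. \<Sum>e\<in>F. if x \<in> e then 1 else 0)"
    using assms by (simp add: sum.inter_filter[symmetric])
  also have "\<dots> = (\<Sum>e\<in>F. \<Sum>x\<in>A. if x \<in> e then 1 else 0)" by (rule sum.swap)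
  also have "\<dots> = (\<Sum>e\<in>F. card (A \<inter> e))"
    using assms by (simp add: sum.inter_filter[symmetric] Int_def)
  also have "\<dots> = (\<Sum>e\<in>F. 2)" using assms by (intro sum.cong) (auto simp: Int_absorb1)
  finally show ?thesis by simp
qed

lemma handshake:
  assumes G: "simple_graph_on V E"
  shows "(\<Sum>x\<in>V. card (neighbours E x)) = 2 * card E"
  using double_counting[of V E] G finite_edges[OF G] degree_eq_card_neighbours[OF G]
  by (simp add: simple_graph_on_def)

lemma card_doubleton_le: "card {a, b} \<le> 2" by (auto simp: card_insert_if)

lemma card_triple_le: "card {a, b, c} \<le> 3" by (auto simp: card_insert_if)

lemma card_quadruple_le: "card {a, b, c, d} \<le> 4" by (auto simp: card_insert_if)

lemma exists_avoiding_three: "3 < card A \<Longrightarrow> \<exists>w\<in>A. w \<noteq> x \<and> w \<noteq> y \<and> w \<noteq> z"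
proof -
  assume "3 < card A"
  moreover have "card A - card {x,y,z} \<le> card (A - {x,y,z})" by (rule diff_card_le_card_Diff) simp
  ultimately have "A - {x,y,z} \<noteq> {}" using card_triple_le[of x y z] by fastforce
  then show ?thesis by blast
qed

lemma contains_graph_by_list:
  assumes "length xs = k" "distinct xs" "set xs \<subseteq> V" "\<And>e. e \<in> LE \<Longrightarrow> (\<lambda>i. xs ! i) ` e \<in> E"
  shows "contains_graph V E k LE"
  unfolding contains_graph_def using assms
  by (intro exI[of _ "(!) xs"]) (auto simp: inj_on_nth)

lemma T1_edges_by_list:
  assumes m: "n = m + 5" and xs: "xs = c # ls @ [a,b,a',b']"
    and len: "length ls = m" and ls: "set ls \<subseteq> neighbours E c"
    and edges: "{c,a} \<in> E" "{c,b} \<in> E" "{a,a'} \<in> E" "{b,b'} \<in> E"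
    and e: "e \<in> T1_edges n"
  shows "(\<lambda>i. xs ! i) ` e \<in> E"
proof -
  have ends: "xs ! 0 = c" "xs ! (m+1) = a" "xs ! (m+2) = b" "xs ! (m+3) = a'" "xs ! (m+4) = b'"
    unfolding xs using len by (simp_all add: nth_append numeral_eq_Suc)
  have spoke: "{c, xs ! i} \<in> E" if i: "1 \<le> i" "i \<le> m + 2" for i
  proof -
    consider "i \<le> m" | "i = m + 1" | "i = m + 2" using i by linarith
    then show ?thesis
    proof cases
      case 1
      have "i - 1 < length ls" using i 1 len by linarith
      then have "xs ! i = ls ! (i - 1)" unfolding xs using i by (simp add: nth_Cons' nth_append)
      then have "xs ! i \<in> neighbours E c" using \<open>i - 1 < length ls\<close> ls by auto
      then show ?thesis by (rule neighbour_edge)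
    next
      case 2 then show ?thesis using ends(2) edges(1) by simp
    next
      case 3 then show ?thesis using ends(3) edges(2) by simp
    qed
  qed
  have idx: "n - 4 = m + 1" "n - 3 = m + 2" "n - 2 = m + 3" "n - 1 = m + 4" using m by auto
  from e consider (star) i where "e = {0,i}" "1 \<le> i" "i \<le> n - 3"
    | (left) "e = {n - 4, n - 2}" | (right) "e = {n - 3, n - 1}"
    unfolding T1_edges_def by auto
  then show ?thesis
  proof cases
    case star then show ?thesis using ends(1) spoke star(2) star(3)[unfolded idx] by simp
  next
    case left then show ?thesis using ends(2,4) edges(3) unfolding idx by simp
  next
    case right then show ?thesis using ends(3,5) edges(4) unfolding idx by simp
  qed
qed

text \<open>The embedding used throughout: a centre \<open>c\<close> with two neighbours \<open>a, b\<close> carrying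
  pendant edges \<open>a a'\<close>, \<open>b b'\<close>, plus \<open>n - 5\<close> further neighbours of \<open>c\<close>, form a copy of
  \<open>T_n^1\<close>.\<close>
lemma contains_T1:
  assumes n: "5 \<le> n" and G: "simple_graph_on V E"
    and edges: "{c,a} \<in> E" "{c,b} \<in> E" "{a,a'} \<in> E" "{b,b'} \<in> E"
    and dist: "distinct [c,a,b,a',b']"
    and L: "L \<subseteq> neighbours E c - {a,b,a',b'}" and cL: "n - 5 \<le> card L"
  shows "contains_graph V E n (T1_edges n)"
proof -
  obtain m where m: "n = m + 5" using n by (metis add.commute le_Suc_ex)
  obtain L' where L': "L' \<subseteq> L" "card L' = m"
    using obtain_subset_with_card_n[of m L] cL m by auto
  have "finite L'" using L' L finite_neighbours[OF G, of c] by (meson finite_Diff finite_subset)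
  then obtain ls where ls: "set ls = L'" "distinct ls" using finite_distinct_list by blast
  have len: "length ls = m" using ls L' distinct_card by metis
  have lsc: "set ls \<subseteq> neighbours E c - {a,b,a',b',c}"
    using ls L' L not_own_neighbour[OF G, of c] by blast
  show ?thesis
  proof (rule contains_graph_by_list)
    show "length (c # ls @ [a,b,a',b']) = n" using len m by simp
    show "distinct (c # ls @ [a,b,a',b'])" using dist ls(2) lsc by auto
    show "set (c # ls @ [a,b,a',b']) \<subseteq> V"
      using lsc neighbours_subset[OF G, of c] edge_endpoints(1)[OF G edges(1)]
        edge_endpoints(2)[OF G edges(1)] edge_endpoints(2)[OF G edges(2)]
        edge_endpoints(2)[OF G edges(3)] edge_endpoints(2)[OF G edges(4)] by auto
    show "(\<lambda>i. (c # ls @ [a,b,a',b']) ! i) ` e \<in> E" if "e \<in> T1_edges n" for e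
      using T1_edges_by_list[OF m refl len _ edges that] lsc by blast
  qed
qed

text \<open>For \<open>n = 5\<close> the tree \<open>T_5^1\<close> is the path on five vertices.\<close>
lemma no_path5:
  assumes G: "simple_graph_on V E" and free: "\<not> contains_graph V E 5 (T1_edges 5)"
    and "{c,a} \<in> E" "{c,b} \<in> E" "{a,a'} \<in> E" "{b,b'} \<in> E" and "distinct [c,a,b,a',b']"
  shows False
  using contains_T1[where L = "{}", OF _ G assms(3-7)] free by simp

definition induced_edges :: "'a set set \<Rightarrow> 'a set \<Rightarrow> 'a set set" where
  "induced_edges E W = {e\<in>E. e \<subseteq> W}"

lemma induced_simple_graph:
  "simple_graph_on V E \<Longrightarrow> W \<subseteq> V \<Longrightarrow> simple_graph_on W (induced_edges E W)"
  unfolding simple_graph_on_def induced_edges_def using finite_subset by auto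

lemma induced_free:
  assumes "\<not> contains_graph V E k L" "W \<subseteq> V"
  shows "\<not> contains_graph W (induced_edges E W) k L"
proof
  assume "contains_graph W (induced_edges E W) k L"
  then obtain f where "inj_on f {0..<k}" "f ` {0..<k} \<subseteq> W" "\<forall>e\<in>L. f ` e \<in> induced_edges E W"
    unfolding contains_graph_def by blast
  then have "contains_graph V E k L"
    unfolding contains_graph_def induced_edges_def using assms(2) by (intro exI[of _ f]) auto
  then show False using assms(1) by simp
qed

lemma card_edges_peel:
  assumes G: "simple_graph_on V E"
  shows "card E = card (induced_edges E (V - S)) + card {e\<in>E. e \<inter> S \<noteq> {}}"
proof -
  have "E = induced_edges E (V - S) \<union> {e\<in>E. e \<inter> S \<noteq> {}}"
    using G unfolding simple_graph_on_def induced_edges_def by blast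
  moreover have "induced_edges E (V - S) \<inter> {e\<in>E. e \<inter> S \<noteq> {}} = {}"
    unfolding induced_edges_def by blast
  ultimately show ?thesis using finite_edges[OF G]
    by (metis (no_types, lifting) card_Un_disjoint finite_Un)
qed

definition separates :: "'a set \<Rightarrow> 'a set set \<Rightarrow> 'a set \<Rightarrow> bool" where
  "separates V E C \<longleftrightarrow> C \<subseteq> V \<and> C \<noteq> {} \<and> C \<noteq> V \<and> (\<forall>e\<in>E. e \<subseteq> C \<or> e \<subseteq> V - C)"

lemma card_edges_separated:
  assumes G: "simple_graph_on V E" and sep: "separates V E C"
  shows "card E = card (induced_edges E C) + card (induced_edges E (V - C))"
proof -
  have "E = induced_edges E C \<union> induced_edges E (V - C)"
    using sep unfolding separates_def induced_edges_def by blast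
  moreover have "induced_edges E C \<inter> induced_edges E (V - C) = {}"
  proof (rule equals0I)
    fix e assume "e \<in> induced_edges E C \<inter> induced_edges E (V - C)"
    then have "e \<in> E" "e \<subseteq> C" "e \<subseteq> V - C" unfolding induced_edges_def by auto
    then show False using edge_doubleton[OF G] by blast
  qed
  ultimately show ?thesis using finite_edges[OF G]
    by (metis (no_types, lifting) card_Un_disjoint finite_Un)
qed

definition T1_bound :: "nat \<Rightarrow> nat \<Rightarrow> nat \<Rightarrow> bool" where
  "T1_bound n N m \<longleftrightarrow> 2 * m \<le> (n - 2) * N \<and> (\<not> (n - 1) dvd N \<longrightarrow> 2 * m + (n - 2) \<le> (n - 2) * N)"

lemma T1_bound_strict: "2 * m + (n - 2) \<le> (n - 2) * N \<Longrightarrow> T1_bound n N m"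
  unfolding T1_bound_def by simp

text \<open>The bound is additive over a separation: if \<open>n - 1\<close> does not divide the sum,
  it does not divide one of the parts.\<close>
lemma T1_bound_add:
  "T1_bound n N1 m1 \<Longrightarrow> T1_bound n N2 m2 \<Longrightarrow> T1_bound n (N1 + N2) (m1 + m2)"
proof -
  assume b1: "T1_bound n N1 m1" and b2: "T1_bound n N2 m2"
  have "\<not> (n - 1) dvd N1 \<or> \<not> (n - 1) dvd N2" if "\<not> (n - 1) dvd (N1 + N2)"
    using that dvd_add by blast
  then show ?thesis using b1 b2 unfolding T1_bound_def add_mult_distrib2 by linarith
qed

lemma T1_bound_peel:
  "T1_bound n N1 m1 \<Longrightarrow> 2 * m2 + (n - 2) \<le> (n - 2) * N2 \<Longrightarrow> T1_bound n (N1 + N2) (m1 + m2)"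
  unfolding T1_bound_def add_mult_distrib2 by linarith

lemma intersecting_edges_star_or_triangle:
  assumes G: "simple_graph_on V E" and F: "F \<subseteq> E" "F \<noteq> {}"
    and I: "\<And>e1 e2. e1 \<in> F \<Longrightarrow> e2 \<in> F \<Longrightarrow> e1 \<inter> e2 \<noteq> {}"
  shows "(\<exists>x. F \<subseteq> {e\<in>E. x \<in> e}) \<or> (\<exists>x y z. F \<subseteq> {{x,y}, {y,z}, {x,z}})"
proof (rule ccontr)
  assume no: "\<not> ?thesis"
  obtain e0 where e0: "e0 \<in> F" using F(2) by auto
  then obtain x y where xy: "e0 = {x,y}" "x \<noteq> y" using edge_doubleton[OF G] F(1) by blast
  obtain e1 where e1: "e1 \<in> F" "x \<notin> e1" using no F(1) by blast
  obtain e2 where e2: "e2 \<in> F" "y \<notin> e2" using no F(1) by blast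
  have "y \<in> e1" "x \<in> e2" using I[OF e0 e1(1)] I[OF e0 e2(1)] xy e1(2) e2(2) by auto
  then obtain z w where z: "e1 = {y,z}" and w: "e2 = {x,w}"
    using edge_through[OF G] F(1) e1(1) e2(1) by (metis subsetD)
  have zw: "z = w" "z \<noteq> x" "z \<noteq> y" using I[OF e1(1) e2(1)] z w e1(2) e2(2) xy(2) by auto
  have "f \<in> {{x,y}, {y,z}, {x,z}}" if f: "f \<in> F" for f
  proof -
    obtain p q where pq: "f = {p,q}" "p \<noteq> q" using edge_doubleton[OF G] F(1) f by blast
    have "f \<inter> {x,y} \<noteq> {}" "f \<inter> {y,z} \<noteq> {}" "f \<inter> {x,z} \<noteq> {}"
      using I[OF f e0] I[OF f e1(1)] I[OF f e2(1)] xy(1) z w zw(1) by simp_all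
    then have "p \<in> {x,y,z}" "q \<in> {x,y,z}" using pq xy(2) zw(2,3) by auto
    then show ?thesis using pq by (auto simp: insert_commute)
  qed
  then show False using no by blast
qed

lemma intersecting_edges_bound:
  assumes G: "simple_graph_on V E" and F: "F \<subseteq> E"
    and I: "\<And>e1 e2. e1 \<in> F \<Longrightarrow> e2 \<in> F \<Longrightarrow> e1 \<inter> e2 \<noteq> {}"
    and D: "\<And>x. card {e\<in>E. x \<in> e} \<le> D" and D3: "3 \<le> D"
  shows "card F \<le> D"
proof (cases "F = {}")
  case False
  then consider x where "F \<subseteq> {e\<in>E. x \<in> e}" | x y z where "F \<subseteq> {{x,y}, {y,z}, {x,z}}"
    using intersecting_edges_star_or_triangle[OF G F _ I] by blast
  then show ?thesis
  proof cases
    case (1 x)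
    then show ?thesis using D[of x] card_mono[OF _ 1] finite_edges[OF G] by fastforce
  next
    case (2 x y z)
    have "card {{x,y}, {y,z}, {x,z}} \<le> 3" by (rule card_triple_le)
    then show ?thesis using D3 card_mono[OF _ 2] by fastforce
  qed
qed simp

text \<open>If \<open>v\<close> has at least \<open>n - 1\<close> neighbours, then any two edges that avoid
  \<open>v\<close> but touch \<open>N(v)\<close> must intersect: two disjoint ones, together with
  \<open>n - 5\<close> further neighbours of \<open>v\<close>, would form a copy of \<open>T_n^1\<close>.\<close>
lemma edges_near_dense_vertex_intersect:
  assumes n: "5 \<le> n" and G: "simple_graph_on V E" and free: "\<not> contains_graph V E n (T1_edges n)"
    and d: "n - 1 \<le> card (neighbours E v)"
    and e1: "e1 \<in> E" "v \<notin> e1" "e1 \<inter> neighbours E v \<noteq> {}"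
    and e2: "e2 \<in> E" "v \<notin> e2" "e2 \<inter> neighbours E v \<noteq> {}"
  shows "e1 \<inter> e2 \<noteq> {}"
proof
  assume disjoint: "e1 \<inter> e2 = {}"
  obtain a where a: "a \<in> e1" "a \<in> neighbours E v" using e1 by auto
  obtain a' where a': "e1 = {a,a'}" "a' \<in> neighbours E a" using edge_through[OF G e1(1) a(1)] .
  obtain b where b: "b \<in> e2" "b \<in> neighbours E v" using e2 by auto
  obtain b' where b': "e2 = {b,b'}" "b' \<in> neighbours E b" using edge_through[OF G e2(1) b(1)] .
  have "distinct [v,a,b,a',b']"
    using disjoint a' b' e1(2) e2(2) not_own_neighbour[OF G, of a] not_own_neighbour[OF G, of b] by auto
  moreover have "n - 5 \<le> card (neighbours E v - {a,b,a',b'})"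
    using diff_card_le_card_Diff[of "{a,b,a',b'}" "neighbours E v"] card_quadruple_le[of a b a' b'] d
    by simp
  ultimately have "contains_graph V E n (T1_edges n)"
    using contains_T1[OF n G neighbour_edge[OF a(2)] neighbour_edge[OF b(2)]
        neighbour_edge[OF a'(2)] neighbour_edge[OF b'(2)] _ order_refl] by blast
  then show False using free by simp
qed

text \<open>The edges meeting \<open>N[v]\<close> are those at \<open>v\<close> plus an
  intersecting family, so there are at most \<open>2 deg(v)\<close> of them.\<close>
lemma peel_dense_vertex:
  assumes n: "6 \<le> n" and G: "simple_graph_on V E" and free: "\<not> contains_graph V E n (T1_edges n)"
    and v: "v \<in> V" and d: "n - 1 \<le> card (neighbours E v)"
    and mx: "\<forall>x\<in>V. card (neighbours E x) \<le> card (neighbours E v)"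
  shows "2 * card {e\<in>E. e \<inter> insert v (neighbours E v) \<noteq> {}} + (n - 2)
      \<le> (n - 2) * card (insert v (neighbours E v))"
proof -
  define S where "S = insert v (neighbours E v)"
  define Ev where "Ev = {e\<in>E. v \<notin> e \<and> e \<inter> neighbours E v \<noteq> {}}"
  have fE: "finite E" using finite_edges[OF G] .
  have Dx: "card {e\<in>E. x \<in> e} \<le> card (neighbours E v)" for x
  proof (cases "x \<in> V")
    case True then show ?thesis using mx degree_eq_card_neighbours[OF G, of x] by simp
  next
    case False
    then show ?thesis using degree_eq_card_neighbours[OF G, of x] neighbours_outside[OF G False] by simp
  qed
  have Ev: "card Ev \<le> card (neighbours E v)"
  proof (rule intersecting_edges_bound[OF G _ _ Dx])
    show "Ev \<subseteq> E" unfolding Ev_def by auto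
    show "e1 \<inter> e2 \<noteq> {}" if "e1 \<in> Ev" "e2 \<in> Ev" for e1 e2
      using edges_near_dense_vertex_intersect[OF _ G free d, of e1 e2] that n unfolding Ev_def by auto
    show "3 \<le> card (neighbours E v)" using d n by linarith
  qed
  have "{e\<in>E. e \<inter> S \<noteq> {}} \<subseteq> {e\<in>E. v \<in> e} \<union> Ev" unfolding S_def Ev_def by auto
  then have "card {e\<in>E. e \<inter> S \<noteq> {}} \<le> card ({e\<in>E. v \<in> e} \<union> Ev)"
    using fE by (intro card_mono) (auto simp: Ev_def)
  also have "\<dots> \<le> card {e\<in>E. v \<in> e} + card Ev" by (rule card_Un_le)
  finally have "card {e\<in>E. e \<inter> S \<noteq> {}} \<le> 2 * card (neighbours E v)"
    using Ev degree_eq_card_neighbours[OF G, of v] by linarith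
  moreover have "card S = card (neighbours E v) + 1"
    unfolding S_def using finite_neighbours[OF G] not_own_neighbour[OF G] by simp
  moreover have "4 * card (neighbours E v) \<le> (n - 2) * card (neighbours E v)"
    using n by (intro mult_le_mono1) linarith
  ultimately show ?thesis unfolding S_def[symmetric] by (simp add: algebra_simps)
qed

lemma escape_other_neighbours:
  assumes G: "simple_graph_on V E" and free: "\<not> contains_graph V E 5 (T1_edges 5)"
    and d: "4 \<le> card (neighbours E v)"
    and x: "x \<in> neighbours E v" and y: "y \<in> neighbours E x" "y \<notin> insert v (neighbours E v)"
    and z: "z \<in> neighbours E v" "z \<noteq> x"
  shows "neighbours E z = {v}"
proof
  show "{v} \<subseteq> neighbours E z" using neighbour_sym[OF G z(1)] by simp
  have irr: "\<And>u. u \<notin> neighbours E u" using not_own_neighbour[OF G] by blast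
  show "neighbours E z \<subseteq> {v}"
  proof
    fix w assume w: "w \<in> neighbours E z"
    show "w \<in> {v}"
    proof (rule ccontr)
      assume wv: "w \<notin> {v}"
      obtain z' where z': "z' \<in> neighbours E v" "z' \<noteq> x" "z' \<noteq> z"
        using exists_avoiding_three[of "neighbours E v" x z z] d by auto
      have vx: "{v,x} \<in> E" "{x,v} \<in> E" "{x,y} \<in> E" "{v,z'} \<in> E"
        using neighbour_edge[OF x] neighbour_edge[OF neighbour_sym[OF G x]] neighbour_edge[OF y(1)]
          neighbour_edge[OF z'(1)] by auto
      consider "w = y" | "w = x" | "w \<noteq> x \<and> w \<noteq> y" by blast
      then show False
      proof cases
        case 1
        then have yz: "{y,z} \<in> E" using neighbour_edge[OF neighbour_sym[OF G w]] by simp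
        show False using no_path5[OF G free vx(3) vx(2) yz vx(4)] x y z z' irr by auto
      next
        case 2
        then have zx: "{z,x} \<in> E" using neighbour_edge[OF w] by simp
        show False
          using no_path5[OF G free zx neighbour_edge[OF neighbour_sym[OF G z(1)]] vx(3) vx(4)]
            x y z z' irr by auto
      next
        case 3
        then show False
          using no_path5[OF G free vx(1) neighbour_edge[OF z(1)] vx(3) neighbour_edge[OF w]]
            x y z wv w irr by auto
      qed
    qed
  qed
qed

lemma escape_second_neighbours:
  assumes G: "simple_graph_on V E" and free: "\<not> contains_graph V E 5 (T1_edges 5)"
    and d: "4 \<le> card (neighbours E v)"
    and x: "x \<in> neighbours E v" and y: "y \<in> neighbours E x" "y \<notin> insert v (neighbours E v)"
    and y': "y' \<in> neighbours E x" "y' \<noteq> v"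
  shows "neighbours E y' = {x}"
proof
  show "{x} \<subseteq> neighbours E y'" using neighbour_sym[OF G y'(1)] by simp
  have irr: "\<And>u. u \<notin> neighbours E u" using not_own_neighbour[OF G] by blast
  have leaf: "neighbours E z = {v}" if "z \<in> neighbours E v" "z \<noteq> x" for z
    using escape_other_neighbours[OF G free d x y that] .
  have y'v: "y' \<notin> neighbours E v"
    using leaf[of y'] neighbour_sym[OF G y'(1)] x irr by fastforce
  show "neighbours E y' \<subseteq> {x}"
  proof
    fix w assume w: "w \<in> neighbours E y'"
    show "w \<in> {x}"
    proof (rule ccontr)
      assume wx: "w \<notin> {x}"
      have wv: "w \<noteq> v" using neighbour_sym[OF G w] y'v by blast
      have wnv: "w \<notin> neighbours E v" using leaf[of w] neighbour_sym[OF G w] y'(2) wx by auto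
      obtain z where z: "z \<in> neighbours E v" "z \<noteq> x"
        using exists_avoiding_three[of "neighbours E v" x x x] d by auto
      show False
        using no_path5[OF G free neighbour_edge[OF y'(1)] neighbour_edge[OF neighbour_sym[OF G x]]
            neighbour_edge[OF w] neighbour_edge[OF z(1)]] x y' y'v z wx wv wnv w irr by auto
    qed
  qed
qed

lemma escape_edges:
  assumes G: "simple_graph_on V E" and free: "\<not> contains_graph V E 5 (T1_edges 5)"
    and d: "4 \<le> card (neighbours E v)"
    and x: "x \<in> neighbours E v" and y: "y \<in> neighbours E x" "y \<notin> insert v (neighbours E v)"
    and e: "e \<in> E" "e \<inter> (insert v (neighbours E v) \<union> neighbours E x) \<noteq> {}"
  shows "e \<in> {e\<in>E. v \<in> e} \<union> ({e\<in>E. x \<in> e} - {{x,v}})"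
proof -
  obtain s where s: "s \<in> e" "s \<in> insert v (neighbours E v) \<union> neighbours E x" using e(2) by blast
  obtain t where t: "e = {s,t}" "t \<in> neighbours E s" using edge_through[OF G e(1) s(1)] .
  consider "s = v" | "s = x" | "s \<in> neighbours E v" "s \<noteq> x" | "s \<in> neighbours E x" "s \<noteq> v"
    using s(2) by blast
  then show ?thesis
  proof cases
    case 1
    then show ?thesis using e s(1) by blast
  next
    case 2
    show ?thesis
    proof (cases "t = v")
      case True
      then show ?thesis using e t(1) by blast
    next
      case False
      then have "e \<noteq> {x,v}" using t(1) 2 by (auto simp: doubleton_eq_iff)
      then show ?thesis using e s(1) 2 by blast
    qed
  next
    case 3
    then have "t = v" using escape_other_neighbours[OF G free d x y 3] t(2) by simp
    then show ?thesis using e t(1) by blast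
  next
    case 4
    then have "t = x" using escape_second_neighbours[OF G free d x y 4] t(2) by simp
    moreover have "s \<noteq> x" using 4 not_own_neighbour[OF G, of x] by blast
    ultimately have "e \<noteq> {x,v}" using t(1) 4 by (auto simp: doubleton_eq_iff)
    then show ?thesis using e t(1) \<open>t = x\<close> by blast
  qed
qed

text \<open>Case 1, counted: the vertices of \<open>N[v] \<union> N(x)\<close> meet only the edges at \<open>v\<close>
  and at \<open>x\<close>, fewer edges than vertices.\<close>
lemma peel_escape:
  assumes G: "simple_graph_on V E" and free: "\<not> contains_graph V E 5 (T1_edges 5)"
    and v: "v \<in> V" and d: "4 \<le> card (neighbours E v)"
    and x: "x \<in> neighbours E v" and y: "y \<in> neighbours E x" "y \<notin> insert v (neighbours E v)"
  obtains S where "S \<subseteq> V" "S \<noteq> {}" "2 * card {e\<in>E. e \<inter> S \<noteq> {}} + 3 \<le> 3 * card S"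
proof -
  define S where "S = insert v (neighbours E v) \<union> (neighbours E x - {v})"
  have fE: "finite E" using finite_edges[OF G] .
  have xv: "{x,v} \<in> E" using neighbour_edge[OF neighbour_sym[OF G x]] .
  have sub: "{e\<in>E. e \<inter> S \<noteq> {}} \<subseteq> {e\<in>E. v \<in> e} \<union> ({e\<in>E. x \<in> e} - {{x,v}})"
    using escape_edges[OF G free d x y] unfolding S_def by blast
  have "card {e\<in>E. e \<inter> S \<noteq> {}} \<le> card ({e\<in>E. v \<in> e} \<union> ({e\<in>E. x \<in> e} - {{x,v}}))"
    using sub fE by (intro card_mono) auto
  also have "\<dots> \<le> card {e\<in>E. v \<in> e} + card ({e\<in>E. x \<in> e} - {{x,v}})" by (rule card_Un_le)
  also have "\<dots> = card (neighbours E v) + (card (neighbours E x) - 1)"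
    using degree_eq_card_neighbours[OF G, of v] degree_eq_card_neighbours[OF G, of x] xv fE
    by (simp add: card_Diff_singleton)
  finally have edges: "card {e\<in>E. e \<inter> S \<noteq> {}} \<le> card (neighbours E v) + (card (neighbours E x) - 1)" .
  have vx: "v \<in> neighbours E x" using neighbour_sym[OF G x] .
  have "neighbours E x \<inter> neighbours E v = {}"
  proof (rule equals0I)
    fix z assume z: "z \<in> neighbours E x \<inter> neighbours E v"
    then have "z \<noteq> x" using not_own_neighbour[OF G, of x] by blast
    then have "neighbours E z = {v}" using escape_other_neighbours[OF G free d x y] z by blast
    moreover have "x \<in> neighbours E z" using neighbour_sym[OF G] z by blast
    moreover have "x \<noteq> v" using x not_own_neighbour[OF G, of v] by blast
    ultimately show False by simp
  qed
  then have "insert v (neighbours E v) \<inter> (neighbours E x - {v}) = {}" by blast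
  then have "card S = card (insert v (neighbours E v)) + card (neighbours E x - {v})"
    unfolding S_def using finite_neighbours[OF G] by (intro card_Un_disjoint) auto
  then have "card S = (card (neighbours E v) + 1) + (card (neighbours E x) - 1)"
    using finite_neighbours[OF G] not_own_neighbour[OF G, of v] vx by (simp add: card_Diff_singleton)
  moreover have "1 \<le> card (neighbours E x)"
    using vx finite_neighbours[OF G, of x] by (metis One_nat_def Suc_leI card_gt_0_iff empty_iff)
  moreover have "S \<subseteq> V" "S \<noteq> {}" unfolding S_def using v neighbours_subset[OF G] by auto
  ultimately show ?thesis using that edges by simp
qed

lemma unique_inner_neighbour:
  assumes G: "simple_graph_on V E" and free: "\<not> contains_graph V E 5 (T1_edges 5)"
    and d: "4 \<le> card (neighbours E v)"
    and x: "x \<in> neighbours E v" and yz: "y \<in> neighbours E x" "z \<in> neighbours E x"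
      "y \<in> neighbours E v" "z \<in> neighbours E v"
  shows "y = z"
proof (rule ccontr)
  assume ne: "y \<noteq> z"
  obtain w where w: "w \<in> neighbours E v" "w \<noteq> x" "w \<noteq> y" "w \<noteq> z"
    using exists_avoiding_three[of "neighbours E v" x y z] d by auto
  show False
    using no_path5[OF G free neighbour_edge[OF neighbour_sym[OF G yz(2)]]
        neighbour_edge[OF neighbour_sym[OF G yz(4)]] neighbour_edge[OF yz(1)] neighbour_edge[OF w(1)]]
      x yz ne w not_own_neighbour[OF G, of v] not_own_neighbour[OF G, of x] by auto
qed

text \<open>If \<open>N[v]\<close> is closed, the edges inside \<open>N(v)\<close> pairwise intersect and each vertex has
  at most one of them, so there is at most one such edge.\<close>
lemma closed_inner_edges:
  assumes G: "simple_graph_on V E" and free: "\<not> contains_graph V E 5 (T1_edges 5)"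
    and d: "4 \<le> card (neighbours E v)"
    and closed: "\<And>x y. x \<in> neighbours E v \<Longrightarrow> y \<in> neighbours E x \<Longrightarrow> y \<in> insert v (neighbours E v)"
  shows "card {e\<in>E. v \<notin> e \<and> e \<inter> neighbours E v \<noteq> {}} \<le> 1"
proof -
  define Ev where "Ev = {e\<in>E. v \<notin> e \<and> e \<inter> neighbours E v \<noteq> {}}"
  have inside: "\<exists>u. e = {s,u} \<and> s \<in> neighbours E v \<and> u \<in> neighbours E v \<and> u \<in> neighbours E s"
    if e: "e \<in> Ev" "s \<in> e" for e s
  proof -
    obtain u where u: "e = {s,u}" "u \<in> neighbours E s"
      using edge_through[OF G _ e(2)] e(1) unfolding Ev_def by blast
    obtain r where r: "r \<in> e" "r \<in> neighbours E v" using e(1) unfolding Ev_def by blast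
    have "s \<noteq> v" "u \<noteq> v" using e(1) u(1) unfolding Ev_def by auto
    have s: "s \<in> neighbours E v"
    proof (cases "r = s")
      case False
      then have "r = u" using r(1) u(1) by blast
      then have "s \<in> insert v (neighbours E v)" using closed[OF r(2)] neighbour_sym[OF G u(2)] by blast
      then show ?thesis using \<open>s \<noteq> v\<close> by blast
    qed (use r in blast)
    then have "u \<in> neighbours E v" using closed[OF s u(2)] \<open>u \<noteq> v\<close> by blast
    then show ?thesis using u s by blast
  qed
  have "finite Ev" using finite_edges[OF G] unfolding Ev_def by simp
  moreover have "\<forall>e1\<in>Ev. \<forall>e2\<in>Ev. e1 = e2"
  proof (intro ballI)
    fix e1 e2 assume e1: "e1 \<in> Ev" and e2: "e2 \<in> Ev"
    have "e1 \<inter> e2 \<noteq> {}"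
      using edges_near_dense_vertex_intersect[OF _ G free, of v e1 e2] e1 e2 d unfolding Ev_def by auto
    then obtain s where s: "s \<in> e1" "s \<in> e2" by blast
    obtain u1 where u1: "e1 = {s,u1}" "s \<in> neighbours E v" "u1 \<in> neighbours E v" "u1 \<in> neighbours E s"
      using inside[OF e1 s(1)] by blast
    obtain u2 where u2: "e2 = {s,u2}" "u2 \<in> neighbours E v" "u2 \<in> neighbours E s"
      using inside[OF e2 s(2)] by blast
    have "u1 = u2" using unique_inner_neighbour[OF G free d u1(2) u1(4) u2(3) u1(3) u2(2)] .
    then show "e1 = e2" using u1(1) u2(1) by simp
  qed
  ultimately show ?thesis unfolding Ev_def[symmetric] by (simp add: card_le_Suc0_iff_eq)
qed

text \<open>Case 2, counted: \<open>N[v]\<close> meets at most \<open>deg(v) + 1 = |N[v]|\<close> edges.\<close>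
lemma peel_closed:
  assumes G: "simple_graph_on V E" and free: "\<not> contains_graph V E 5 (T1_edges 5)"
    and d: "4 \<le> card (neighbours E v)"
    and closed: "\<And>x y. x \<in> neighbours E v \<Longrightarrow> y \<in> neighbours E x \<Longrightarrow> y \<in> insert v (neighbours E v)"
  shows "2 * card {e\<in>E. e \<inter> insert v (neighbours E v) \<noteq> {}} + 3 \<le> 3 * card (insert v (neighbours E v))"
proof -
  define Ev where "Ev = {e\<in>E. v \<notin> e \<and> e \<inter> neighbours E v \<noteq> {}}"
  have "{e\<in>E. e \<inter> insert v (neighbours E v) \<noteq> {}} \<subseteq> {e\<in>E. v \<in> e} \<union> Ev" unfolding Ev_def by auto
  then have "card {e\<in>E. e \<inter> insert v (neighbours E v) \<noteq> {}} \<le> card ({e\<in>E. v \<in> e} \<union> Ev)"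
    using finite_edges[OF G] by (intro card_mono) (auto simp: Ev_def)
  also have "\<dots> \<le> card {e\<in>E. v \<in> e} + card Ev" by (rule card_Un_le)
  moreover have "card Ev \<le> 1" unfolding Ev_def using closed_inner_edges[OF G free d] closed by blast
  ultimately have "card {e\<in>E. e \<inter> insert v (neighbours E v) \<noteq> {}} \<le> card (neighbours E v) + 1"
    using degree_eq_card_neighbours[OF G, of v] by linarith
  moreover have "card (insert v (neighbours E v)) = card (neighbours E v) + 1"
    using finite_neighbours[OF G, of v] not_own_neighbour[OF G, of v] by simp
  ultimately show ?thesis using d by linarith
qed

lemma high_degree_peel:
  assumes n: "5 \<le> n" and G: "simple_graph_on V E" and free: "\<not> contains_graph V E n (T1_edges n)"
    and v: "v \<in> V" and d: "n - 1 \<le> card (neighbours E v)"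
    and mx: "\<forall>x\<in>V. card (neighbours E x) \<le> card (neighbours E v)"
  obtains S where "S \<subseteq> V" "S \<noteq> {}" "2 * card {e\<in>E. e \<inter> S \<noteq> {}} + (n - 2) \<le> (n - 2) * card S"
proof (cases "n = 5")
  case True
  then have free5: "\<not> contains_graph V E 5 (T1_edges 5)" and d4: "4 \<le> card (neighbours E v)"
    using free d by simp_all
  show ?thesis
  proof (cases "\<exists>x\<in>neighbours E v. \<exists>y\<in>neighbours E x. y \<notin> insert v (neighbours E v)")
    case True
    then obtain x y where "x \<in> neighbours E v" "y \<in> neighbours E x" "y \<notin> insert v (neighbours E v)"
      by blast
    then obtain S where "S \<subseteq> V" "S \<noteq> {}" "2 * card {e\<in>E. e \<inter> S \<noteq> {}} + 3 \<le> 3 * card S"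
      using peel_escape[OF G free5 v d4] by blast
    then show ?thesis using that \<open>n = 5\<close> by simp
  next
    case False
    then have "2 * card {e\<in>E. e \<inter> insert v (neighbours E v) \<noteq> {}} + 3 \<le> 3 * card (insert v (neighbours E v))"
      using peel_closed[OF G free5 d4] by blast
    then show ?thesis using that[of "insert v (neighbours E v)"] v neighbours_subset[OF G] \<open>n = 5\<close> by simp
  qed
next
  case False
  then have "6 \<le> n" using n by simp
  from peel_dense_vertex[OF this G free v d mx] show ?thesis
    using that[of "insert v (neighbours E v)"] v neighbours_subset[OF G] by simp
qed

text \<open>Graphs with fewer than \<open>n\<close> vertices satisfy the bound trivially,
  since all degrees are then at most \<open>n - 2\<close>.\<close>
lemma small_graph_bound:
  assumes G: "simple_graph_on V E" and small: "card V \<le> n - 1"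
  shows "T1_bound n (card V) (card E)"
proof -
  have fV: "finite V" using G unfolding simple_graph_on_def by simp
  have "card (neighbours E x) \<le> card V - 1" if "x \<in> V" for x
  proof -
    have "neighbours E x \<subseteq> V - {x}" using neighbours_subset[OF G] not_own_neighbour[OF G] by blast
    then show ?thesis using that fV card_mono[of "V - {x}"] by (simp add: card_Diff_singleton)
  qed
  then have "2 * card E \<le> card V * (card V - 1)"
    using sum_bounded_above[of V "\<lambda>x. card (neighbours E x)" "card V - 1"] handshake[OF G] by simp
  moreover have "card V * (card V - 1) \<le> (n - 2) * card V"
  proof -
    have "card V - 1 \<le> n - 2" using small by linarith
    then show ?thesis using mult_le_mono2[of "card V - 1" "n - 2" "card V"] by (simp add: mult.commute)
  qed
  moreover have "card V * (card V - 1) + (n - 2) \<le> (n - 2) * card V"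
    if "card V \<noteq> n - 1" "card V \<noteq> 0"
  proof -
    have "card V \<le> n - 2" using small that by linarith
    then have "card V * (card V - 1) \<le> (n - 2) * (card V - 1)" by (rule mult_le_mono1)
    moreover have "(n - 2) * (card V - 1) + (n - 2) = (n - 2) * card V"
      using that(2) by (metis Suc_pred' mult_Suc_right add.commute neq0_conv)
    ultimately show ?thesis by linarith
  qed
  ultimately show ?thesis unfolding T1_bound_def by (metis dvd_0_right dvd_refl le_trans add_le_mono1)
qed

lemma low_max_degree_bound:
  assumes G: "simple_graph_on V E" and deg: "\<forall>x\<in>V. card (neighbours E x) \<le> n - 3"
    and big: "n - 2 \<le> card V" and n: "3 \<le> n"
  shows "T1_bound n (card V) (card E)"
proof (rule T1_bound_strict)
  have "2 * card E \<le> card V * (n - 3)"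
    using sum_bounded_above[of V "\<lambda>x. card (neighbours E x)" "n - 3"] deg handshake[OF G] by simp
  moreover have "(n - 2) * card V = (n - 3) * card V + card V"
    using n by (metis Suc_diff_Suc add.commute mult_Suc numeral_2_eq_2 numeral_3_eq_3 less_eq_Suc_le Suc_le_lessD)
  ultimately show "2 * card E + (n - 2) \<le> (n - 2) * card V" using big by (simp add: mult.commute)
qed

lemma deficient_degree_sum_bound:
  assumes G: "simple_graph_on V E" and deg: "\<forall>x\<in>V. card (neighbours E x) \<le> D"
    and A: "A \<subseteq> V" "card A = D" and sumA: "(\<Sum>x\<in>A. card (neighbours E x)) \<le> D * (D - 1)"
    and big: "D < card V"
  shows "2 * card E + D \<le> D * card V"
proof -
  have fV: "finite V" using G unfolding simple_graph_on_def by simp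
  have "(\<Sum>x\<in>V - A. card (neighbours E x)) \<le> card (V - A) * D"
    using sum_bounded_above[of "V - A" "\<lambda>x. card (neighbours E x)" D] deg by force
  moreover have "card (V - A) = card V - D" using A fV by (simp add: card_Diff_subset finite_subset)
  ultimately have "(\<Sum>x\<in>V - A. card (neighbours E x)) \<le> (card V - D) * D" by simp
  moreover have "2 * card E = (\<Sum>x\<in>V - A. card (neighbours E x)) + (\<Sum>x\<in>A. card (neighbours E x))"
    using handshake[OF G] sum.subset_diff[OF A(1) fV, of "\<lambda>x. card (neighbours E x)"] by linarith
  ultimately have "2 * card E \<le> (card V - D) * D + D * (D - 1)" using sumA by linarith
  moreover have "(card V - D) * D + D * (D - 1) + D = D * card V"
  proof -
    have "D * (D - 1) + D = D * D" by (cases D) auto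
    moreover have "(card V - D) * D + D * D = D * card V"
      using big by (metis add_mult_distrib le_add_diff_inverse2 less_imp_le mult.commute)
    ultimately show ?thesis by linarith
  qed
  ultimately show ?thesis by linarith
qed

text \<open>Let \<open>v\<close> have exactly \<open>n - 2\<close> neighbours and let \<open>a \<in> N(v)\<close> have a
  neighbour \<open>a'\<close> outside \<open>N[v]\<close>. Then every other neighbour \<open>b\<close> of \<open>v\<close>
  has all its neighbours in \<open>{v, a, a'}\<close>: a further neighbour \<open>b'\<close> of \<open>b\<close>
  would complete a copy of \<open>T_n^1\<close> centred at \<open>v\<close>.\<close>
lemma saturated_neighbours:
  assumes n: "5 \<le> n" and G: "simple_graph_on V E" and free: "\<not> contains_graph V E n (T1_edges n)"
    and d: "card (neighbours E v) = n - 2"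
    and a: "a \<in> neighbours E v" and a': "a' \<in> neighbours E a" "a' \<notin> neighbours E v" "a' \<noteq> v"
    and b: "b \<in> neighbours E v" "b \<noteq> a"
  shows "neighbours E b \<subseteq> {v, a, a'}"
proof
  fix b' assume b': "b' \<in> neighbours E b"
  show "b' \<in> {v, a, a'}"
  proof (rule ccontr)
    assume new: "b' \<notin> {v, a, a'}"
    have "card (neighbours E v) - card {a, b, b'} \<le> card (neighbours E v - {a, b, b'})"
      by (rule diff_card_le_card_Diff) simp
    moreover have "neighbours E v - {a, b, a', b'} = neighbours E v - {a, b, b'}" using a' by auto
    ultimately have many: "n - 5 \<le> card (neighbours E v - {a, b, a', b'})"
      using card_triple_le[of a b b'] d by simp
    have "distinct [v, a, b, a', b']"
      using new a b a' b' not_own_neighbour[OF G, of v] not_own_neighbour[OF G, of a]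
        not_own_neighbour[OF G, of b] by auto
    then have "contains_graph V E n (T1_edges n)"
      using contains_T1[OF n G neighbour_edge[OF a] neighbour_edge[OF b(1)]
          neighbour_edge[OF a'(1)] neighbour_edge[OF b'] _ order_refl many] by blast
    then show False using free by simp
  qed
qed

text \<open>First case of the degree count around a saturated vertex \<open>v\<close>: no other neighbour
  of \<open>v\<close> sees \<open>a'\<close>, so every \<open>b \<in> N(v) - {a}\<close> has degree at most 2, and
  degree 2 only if it is adjacent to \<open>a\<close>.\<close>
lemma saturated_degree_sum_private:
  assumes n: "5 \<le> n" and G: "simple_graph_on V E" and free: "\<not> contains_graph V E n (T1_edges n)"
    and d: "card (neighbours E v) = n - 2" and da: "card (neighbours E a) \<le> n - 2"
    and a: "a \<in> neighbours E v" and a': "a' \<in> neighbours E a" "a' \<notin> neighbours E v" "a' \<noteq> v"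
    and unshared: "\<forall>b\<in>neighbours E v - {a}. a' \<notin> neighbours E b"
  shows "(\<Sum>x\<in>neighbours E v. card (neighbours E x)) \<le> (n - 2) * (n - 3)"
proof -
  define B where "B = neighbours E v - {a}"
  have fin: "\<And>x. finite (neighbours E x)" using finite_neighbours[OF G] by blast
  have fB: "finite B" unfolding B_def using fin by simp
  have cB: "card B = n - 3" unfolding B_def using a d fin by (simp add: card_Diff_singleton)
  have db: "card (neighbours E b) \<le> 1 + (if b \<in> neighbours E a then 1 else 0)" if b: "b \<in> B" for b
  proof -
    have "neighbours E b \<subseteq> (if b \<in> neighbours E a then {v, a} else {v})"
      using saturated_neighbours[OF n G free d a a'] b unshared neighbours_sym[OF G, of a b]
      unfolding B_def by auto
    then have "card (neighbours E b) \<le> card (if b \<in> neighbours E a then {v, a} else {v})"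
      by (intro card_mono) auto
    then show ?thesis by (simp add: card_insert_if split: if_splits)
  qed
  have "(\<Sum>x\<in>B. card (neighbours E x)) \<le> (\<Sum>x\<in>B. 1 + (if x \<in> neighbours E a then 1 else 0))"
    by (rule sum_mono) (rule db)
  also have "\<dots> = (\<Sum>x\<in>B. 1) + (\<Sum>x\<in>B. if x \<in> neighbours E a then 1 else 0)"
    by (rule sum.distrib)
  also have "\<dots> = card B + card {x\<in>B. x \<in> neighbours E a}"
    using fB by (simp add: sum.inter_filter[symmetric])
  also have "card {x\<in>B. x \<in> neighbours E a} \<le> card (neighbours E a - {v, a'})"
    using fin a' not_own_neighbour[OF G, of v] unfolding B_def by (intro card_mono) auto
  also have "\<dots> = card (neighbours E a) - 2"
    using a' neighbour_sym[OF G a] fin by (simp add: card_Diff_subset)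
  finally have "(\<Sum>x\<in>B. card (neighbours E x)) \<le> (n - 3) + (card (neighbours E a) - 2)"
    using cB by simp
  moreover have "(\<Sum>x\<in>neighbours E v. card (neighbours E x))
      = card (neighbours E a) + (\<Sum>x\<in>B. card (neighbours E x))"
    unfolding B_def using sum.remove[OF fin a] .
  moreover have "3 * n - 9 \<le> (n - 2) * (n - 3)"
  proof -
    obtain m where "n = m + 5" using n by (metis add.commute le_Suc_ex)
    then show ?thesis by (simp add: algebra_simps)
  qed
  ultimately show ?thesis using da n by linarith
qed

text \<open>If two neighbours of a vertex of degree \<open>n - 2\<close> share an outside neighbour, then
  \<open>n \<ge> 6\<close>: for \<open>n = 5\<close> they would close a path on five vertices.\<close>
lemma shared_outside_neighbour_large:
  assumes n: "5 \<le> n" and G: "simple_graph_on V E" and free: "\<not> contains_graph V E n (T1_edges n)"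
    and d: "card (neighbours E v) = n - 2"
    and a: "a \<in> neighbours E v" and a': "a' \<in> neighbours E a" "a' \<notin> neighbours E v" "a' \<noteq> v"
    and b: "b \<in> neighbours E v" "b \<noteq> a" "a' \<in> neighbours E b"
  shows "6 \<le> n"
proof (rule ccontr)
  assume "\<not> 6 \<le> n"
  then have n5: "n = 5" using n by simp
  have "card (neighbours E v - {a, b}) = 1"
    using a b(1,2) d n5 finite_neighbours[OF G, of v] by (simp add: card_Diff_subset)
  then obtain c where "c \<in> neighbours E v - {a, b}" by (metis card_1_singletonE insertI1)
  then have c: "c \<in> neighbours E v" "c \<noteq> a" "c \<noteq> b" by auto
  have "distinct [a, v, a', c, b]"
    using a a' b c not_own_neighbour[OF G, of v] by auto
  then show False
    using no_path5[OF G _ neighbour_edge[OF neighbour_sym[OF G a]] neighbour_edge[OF a'(1)]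
        neighbour_edge[OF c(1)] neighbour_edge[OF neighbour_sym[OF G b(3)]]] free n5 by simp
qed

text \<open>Second case: some \<open>b \<in> N(v) - {a}\<close> also sees \<open>a'\<close>. Then \<open>n \<ge> 6\<close>, and both \<open>a\<close>
  and \<open>b\<close> play the role of the vertex with an outside neighbour, which forces all degrees
  in \<open>N(v)\<close> to be small.\<close>
lemma saturated_degree_sum_shared:
  assumes n: "5 \<le> n" and G: "simple_graph_on V E" and free: "\<not> contains_graph V E n (T1_edges n)"
    and d: "card (neighbours E v) = n - 2"
    and a: "a \<in> neighbours E v" and a': "a' \<in> neighbours E a" "a' \<notin> neighbours E v" "a' \<noteq> v"
    and b: "b \<in> neighbours E v" "b \<noteq> a" "a' \<in> neighbours E b"
  shows "(\<Sum>x\<in>neighbours E v. card (neighbours E x)) \<le> (n - 2) * (n - 3)"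
proof -
  have fin: "\<And>x. finite (neighbours E x)" using finite_neighbours[OF G] by blast
  have near_a: "neighbours E x \<subseteq> {v, a, a'}" if "x \<in> neighbours E v" "x \<noteq> a" for x
    using saturated_neighbours[OF n G free d a a' that] .
  have near_b: "neighbours E x \<subseteq> {v, b, a'}" if "x \<in> neighbours E v" "x \<noteq> b" for x
    using saturated_neighbours[OF n G free d b(1) b(3) a'(2,3) that] .
  have n6: "6 \<le> n" using shared_outside_neighbour_large[OF n G free d a a' b] .
  have "card (neighbours E a) \<le> card {v, b, a'}" "card (neighbours E b) \<le> card {v, a, a'}"
    using near_b[OF a b(2)[symmetric]] near_a[OF b(1,2)] by (auto intro: card_mono)
  then have "card (neighbours E a) \<le> 3" "card (neighbours E b) \<le> 3"
    using card_triple_le[of v b a'] card_triple_le[of v a a'] by linarith+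
  moreover have small: "card (neighbours E x) \<le> 2" if "x \<in> neighbours E v - {a, b}" for x
  proof -
    have "a \<noteq> v" "b \<noteq> v" "a \<noteq> a'" "b \<noteq> a'"
      using a b a' not_own_neighbour[OF G, of v] not_own_neighbour[OF G, of a] by auto
    then have "neighbours E x \<subseteq> {v, a'}" using near_a[of x] near_b[of x] that b(2) by auto
    then have "card (neighbours E x) \<le> card {v, a'}" by (auto intro: card_mono)
    then show ?thesis using card_doubleton_le[of v a'] by linarith
  qed
  then have "(\<Sum>x\<in>neighbours E v - {a, b}. card (neighbours E x)) \<le> card (neighbours E v - {a, b}) * 2"
    using sum_bounded_above[of "neighbours E v - {a, b}" "\<lambda>x. card (neighbours E x)" 2] small by simp
  moreover have "card (neighbours E v - {a, b}) = n - 4" using a b(1,2) d fin by (simp add: card_Diff_subset)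
  moreover have "(\<Sum>x\<in>neighbours E v. card (neighbours E x))
      = card (neighbours E a) + card (neighbours E b) + (\<Sum>x\<in>neighbours E v - {a, b}. card (neighbours E x))"
  proof -
    have "b \<in> neighbours E v - {a}" "neighbours E v - {a} - {b} = neighbours E v - {a, b}" using b by auto
    then show ?thesis
      using sum.remove[OF fin a, of "\<lambda>x. card (neighbours E x)"] fin
        sum.remove[of "neighbours E v - {a}" b "\<lambda>x. card (neighbours E x)"] by simp
  qed
  moreover have "2 * n - 2 \<le> (n - 2) * (n - 3)"
  proof -
    obtain m where "n = m + 6" using n6 by (metis add.commute le_Suc_ex)
    then show ?thesis by (simp add: algebra_simps)
  qed
  ultimately show ?thesis using n6 by linarith
qed

text \<open>If some vertex \<open>v\<close> of maximum degree \<open>n - 2\<close> has a neighbour \<open>a\<close> with a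
  neighbour \<open>a'\<close> outside \<open>N[v]\<close>, the degrees in \<open>N(v)\<close> sum to at most
  \<open>(n - 2)(n - 3)\<close>, i.e. on average they fall short of the maximum by one.\<close>
lemma saturated_degree_sum:
  assumes n: "5 \<le> n" and G: "simple_graph_on V E" and free: "\<not> contains_graph V E n (T1_edges n)"
    and deg: "\<forall>x\<in>V. card (neighbours E x) \<le> n - 2" and d: "card (neighbours E v) = n - 2"
    and a: "a \<in> neighbours E v" and a': "a' \<in> neighbours E a" "a' \<notin> neighbours E v" "a' \<noteq> v"
  shows "(\<Sum>x\<in>neighbours E v. card (neighbours E x)) \<le> (n - 2) * (n - 3)"
proof (cases "\<exists>b\<in>neighbours E v - {a}. a' \<in> neighbours E b")
  case True
  then show ?thesis using saturated_degree_sum_shared[OF n G free d a a'] by blast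
next
  case False
  have "card (neighbours E a) \<le> n - 2" using deg neighbours_subset[OF G] a by blast
  then show ?thesis using saturated_degree_sum_private[OF n G free d _ a a'] False by blast
qed

text \<open>The bound for connected graphs of maximum degree at most \<open>n - 2\<close>: only a
  vertex of degree exactly \<open>n - 2\<close> needs work, and connectivity provides the edge
  leaving its closed neighbourhood required by the degree count above.\<close>
lemma connected_low_degree_bound:
  assumes n: "5 \<le> n" and G: "simple_graph_on V E" and free: "\<not> contains_graph V E n (T1_edges n)"
    and deg: "\<forall>x\<in>V. card (neighbours E x) \<le> n - 2" and conn: "\<nexists>C. separates V E C"
  shows "T1_bound n (card V) (card E)"
proof -
  consider (small) "card V \<le> n - 1" | (sparse) "n - 1 < card V" "\<forall>x\<in>V. card (neighbours E x) \<le> n - 3"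
    | (saturated) v where "n - 1 < card V" "v \<in> V" "card (neighbours E v) = n - 2"
    using deg by fastforce
  then show ?thesis
  proof cases
    case small
    then show ?thesis by (rule small_graph_bound[OF G])
  next
    case sparse
    then show ?thesis using low_max_degree_bound[OF G] n by simp
  next
    case (saturated v)
    define C where "C = insert v (neighbours E v)"
    have fin: "finite (neighbours E v)" using finite_neighbours[OF G] .
    have "card C = n - 1"
      unfolding C_def using saturated(3) fin not_own_neighbour[OF G, of v] n by simp
    then have "C \<subseteq> V" "C \<noteq> {}" "C \<noteq> V"
      unfolding C_def using saturated(1,2) neighbours_subset[OF G, of v] by auto
    then obtain e where e: "e \<in> E" "\<not> e \<subseteq> C" "\<not> e \<subseteq> V - C"
      using conn unfolding separates_def by blast
    then obtain s t where s: "s \<in> e" "s \<in> C" and t: "t \<in> e" "t \<notin> C"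
      using G unfolding simple_graph_on_def by blast
    obtain t' where "e = {s, t'}" "t' \<in> neighbours E s" using edge_through[OF G e(1) s(1)] .
    then have st: "t \<in> neighbours E s" using s t by auto
    then have a: "s \<in> neighbours E v" using s t unfolding C_def by auto
    have "t \<notin> neighbours E v" "t \<noteq> v" using t unfolding C_def by auto
    then have "(\<Sum>x\<in>neighbours E v. card (neighbours E x)) \<le> (n - 2) * (n - 2 - 1)"
      using saturated_degree_sum[OF n G free deg saturated(3) a st] by (simp add: numeral_eq_Suc)
    then show ?thesis
      using deficient_degree_sum_bound[OF G deg neighbours_subset[OF G] saturated(3)] saturated(1)
      by (intro T1_bound_strict) simp
  qed
qed

lemma exists_max_degree_vertex:
  assumes "finite V" "V \<noteq> {}"
  shows "\<exists>v\<in>V. \<forall>x\<in>V. card (neighbours E x) \<le> card (neighbours E v)"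
proof -
  have "Max ((\<lambda>x. card (neighbours E x)) ` V) \<in> (\<lambda>x. card (neighbours E x)) ` V"
    using assms by (intro Max_in) auto
  then obtain v where v: "v \<in> V" and "card (neighbours E v) = Max ((\<lambda>x. card (neighbours E x)) ` V)"
    by auto
  then have "\<forall>x\<in>V. card (neighbours E x) \<le> card (neighbours E v)" using assms(1) by simp
  then show ?thesis using v by blast
qed

theorem T1_free_bound:
  fixes V :: "'a set"
  assumes n: "5 \<le> n" and "simple_graph_on V E" and "\<not> contains_graph V E n (T1_edges n)"
  shows "T1_bound n (card V) (card E)"
  using assms(2,3)
proof (induction "card V" arbitrary: V E rule: less_induct)
  case less
  note G = less.prems(1) and free = less.prems(2)
  have fV: "finite V" using G unfolding simple_graph_on_def by simp
  have IH: "T1_bound n (card W) (card (induced_edges E W))" if W: "W \<subset> V" for W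
    using less.hyps[OF psubset_card_mono[OF fV W]] induced_simple_graph[OF G] induced_free[OF free] W
    by blast
  have split: "card V = card W + card (V - W)" if "W \<subseteq> V" for W
    using that fV by (metis card_Diff_subset card_mono finite_subset le_add_diff_inverse)
  show ?case
  proof (cases "V = {}")
    case True
    then have "E = {}" using G unfolding simple_graph_on_def by auto
    then show ?thesis using True unfolding T1_bound_def by simp
  next
    case False
    then obtain v where v: "v \<in> V" and mx: "\<forall>x\<in>V. card (neighbours E x) \<le> card (neighbours E v)"
      using exists_max_degree_vertex[OF fV] by blast
    consider (dense) "n - 1 \<le> card (neighbours E v)" | (separated) C where "separates V E C"
      | (connected) "\<forall>x\<in>V. card (neighbours E x) \<le> n - 2" "\<nexists>C. separates V E C"
      using mx by fastforce
    then show ?thesis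
    proof cases
      case dense
      obtain S where S: "S \<subseteq> V" "S \<noteq> {}" "2 * card {e\<in>E. e \<inter> S \<noteq> {}} + (n - 2) \<le> (n - 2) * card S"
        using high_degree_peel[OF n G free v dense mx] .
      have "T1_bound n (card (V - S)) (card (induced_edges E (V - S)))" using IH S(1,2) by blast
      then show ?thesis
        using T1_bound_peel[OF _ S(3)] card_edges_peel[OF G, of S] split[OF S(1)] by (metis add.commute)
    next
      case (separated C)
      then have "C \<subset> V" "V - C \<subset> V" unfolding separates_def by auto
      then show ?thesis
        using T1_bound_add[OF IH IH] card_edges_separated[OF G separated] split separated
        unfolding separates_def by metis
    next
      case connected
      then show ?thesis using connected_low_degree_bound[OF n G free] by blast
    qed
  qed
qed

text \<open>The lower bound comes from the disjoint union of cliques \<open>K_k\<close> on the consecutive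
  blocks \<open>{k*m..<k*m+k}\<close> of \<open>{0..<p}\<close> (the last block possibly smaller).\<close>
definition clique_blocks :: "nat \<Rightarrow> nat \<Rightarrow> nat set set" where
  "clique_blocks k p = {{i,j} | i j. i < p \<and> j < p \<and> i \<noteq> j \<and> i div k = j div k}"

lemma div_eq_iff_interval: "0 < (k::nat) \<Longrightarrow> j div k = m \<longleftrightarrow> k * m \<le> j \<and> j < k * m + k"
proof
  assume k: "0 < k" and jm: "j div k = m"
  have "j = k * m + j mod k" using jm mult_div_mod_eq[of k j] by simp
  moreover have "j mod k < k" using k by simp
  ultimately show "k * m \<le> j \<and> j < k * m + k" by linarith
next
  assume "0 < k" "k * m \<le> j \<and> j < k * m + k"
  then show "j div k = m" by (intro div_nat_eqI) auto
qed

lemma clique_blocks_simple_graph: "simple_graph_on {0..<p} (clique_blocks k p)"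
  unfolding simple_graph_on_def clique_blocks_def by auto

lemma clique_blocks_edge: "{x,y} \<in> clique_blocks k p \<Longrightarrow> x div k = y div k"
  unfolding clique_blocks_def by (auto simp: doubleton_eq_iff)

lemma clique_blocks_neighbours:
  "i < p \<Longrightarrow> neighbours (clique_blocks k p) i = {j. j < p \<and> j div k = i div k} - {i}"
  unfolding neighbours_def clique_blocks_def by (auto simp: doubleton_eq_iff)

text \<open>\<open>T_n^1\<close> is connected: a function constant along its edges is constant.\<close>
lemma T1_connected:
  assumes n: "5 \<le> n" and const: "\<And>i j. {i,j} \<in> T1_edges n \<Longrightarrow> g i = g j" and i: "i < n"
  shows "g i = g 0"
proof -
  have spoke: "g j = g 0" if "1 \<le> j" "j \<le> n - 3" for j
  proof -
    have "{0,j} \<in> T1_edges n" unfolding T1_edges_def using that by blast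
    then show ?thesis using const[of 0 j] by simp
  qed
  have "{n - 4, n - 2} \<in> T1_edges n" "{n - 3, n - 1} \<in> T1_edges n" unfolding T1_edges_def by simp_all
  then have "g (n - 2) = g (n - 4)" "g (n - 1) = g (n - 3)" using const by metis+
  moreover consider "i = 0" | "1 \<le> i \<and> i \<le> n - 3" | "i = n - 2" | "i = n - 1" using i by linarith
  ultimately show ?thesis using spoke[of "n - 4"] spoke[of "n - 3"] spoke[of i] n by (cases, auto)
qed

text \<open>Each block has at most \<open>n - 1\<close> vertices, so no connected \<open>n\<close>-vertex graph fits.\<close>
lemma clique_blocks_free:
  assumes n: "5 \<le> n"
  shows "\<not> contains_graph {0..<p} (clique_blocks (n - 1) p) n (T1_edges n)"
proof
  let ?k = "n - 1"
  assume "contains_graph {0..<p} (clique_blocks ?k p) n (T1_edges n)"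
  then obtain f where inj: "inj_on f {0..<n}" and ed: "\<forall>e\<in>T1_edges n. f ` e \<in> clique_blocks ?k p"
    unfolding contains_graph_def by blast
  let ?m = "f 0 div ?k"
  have "f i div ?k = ?m" if "i < n" for i
  proof (rule T1_connected[OF n _ that])
    fix i j assume "{i,j} \<in> T1_edges n"
    then have "{f i, f j} \<in> clique_blocks ?k p" using ed by force
    then show "f i div ?k = f j div ?k" by (rule clique_blocks_edge)
  qed
  then have "f ` {0..<n} \<subseteq> {?k * ?m..<?k * ?m + ?k}"
    using div_eq_iff_interval[of ?k] n by auto
  then have "card (f ` {0..<n}) \<le> ?k" using card_mono[of "{?k * ?m..<?k * ?m + ?k}"] by fastforce
  moreover have "card (f ` {0..<n}) = n" using card_image[OF inj] by simp
  ultimately show False using n by simp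
qed

lemma clique_blocks_degree:
  assumes k: "0 < k" and i: "i < p"
  shows "card (neighbours (clique_blocks k p) i) = (if i < k * (p div k) then k - 1 else p mod k - 1)"
proof -
  define q where "q = p div k"
  have "p = k * q + p mod k" "p mod k < k" unfolding q_def using k by simp_all
  then have p: "k * q \<le> p" "p < k * q + k" "p mod k = p - k * q" by linarith+
  define m where "m = i div k"
  have nb: "neighbours (clique_blocks k p) i = {j. j < p \<and> j div k = m} - {i}"
    using clique_blocks_neighbours[OF i] unfolding m_def .
  show ?thesis
  proof (cases "i < k * q")
    case True
    then have "m < q" using less_mult_imp_div_less[of i q k] unfolding m_def by (simp add: mult.commute)
    then have "k * m + k \<le> k * q" by (metis Suc_leI mult_Suc_right mult_le_mono2 add.commute)
    then have "{j. j < p \<and> j div k = m} = {k * m..<k * m + k}"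
      using div_eq_iff_interval[OF k] p(1) by auto
    moreover have "i \<in> {k * m..<k * m + k}" using div_eq_iff_interval[OF k, of i m] unfolding m_def by simp
    ultimately show ?thesis using nb True unfolding q_def by simp
  next
    case False
    then have "m = q" using div_eq_iff_interval[OF k, of i q] i p(2) unfolding m_def by auto
    then have "{j. j < p \<and> j div k = m} = {k * q..<p}" using div_eq_iff_interval[OF k] p(2) by auto
    moreover have "i \<in> {k * q..<p}" using False i by auto
    ultimately show ?thesis using nb False p(3) unfolding q_def by simp
  qed
qed

lemma card_clique_blocks:
  assumes k: "0 < k"
  shows "2 * card (clique_blocks k p) = k * (p div k) * (k - 1) + (p mod k) * (p mod k - 1)"
proof -
  let ?deg = "\<lambda>i. card (neighbours (clique_blocks k p) i)"
  have split: "k * (p div k) \<le> p" "p - k * (p div k) = p mod k" by (simp_all add: minus_div_mult_eq_mod[symmetric] mult.commute)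
  have "2 * card (clique_blocks k p) = (\<Sum>i\<in>{0..<k * (p div k)}. ?deg i) + (\<Sum>i\<in>{k * (p div k)..<p}. ?deg i)"
    using handshake[OF clique_blocks_simple_graph] sum.atLeastLessThan_concat[OF _ split(1), of 0 ?deg]
    by simp
  also have "\<dots> = (\<Sum>i\<in>{0..<k * (p div k)}. k - 1) + (\<Sum>i\<in>{k * (p div k)..<p}. p mod k - 1)"
  proof (intro arg_cong2[where f = "(+)"] sum.cong refl)
    fix i assume "i \<in> {0..<k * (p div k)}"
    then show "?deg i = k - 1" using clique_blocks_degree[OF k, of i p] split(1) by simp
  next
    fix i assume "i \<in> {k * (p div k)..<p}"
    then show "?deg i = p mod k - 1" using clique_blocks_degree[OF k, of i p] by simp
  qed
  also have "\<dots> = k * (p div k) * (k - 1) + (p mod k) * (p mod k - 1)" using split(2) by simp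
  finally show ?thesis .
qed

text \<open>The real inequality behind the lower bound: their difference is \<open>(2R - K)^2 / 8\<close>.\<close>
lemma block_count_lower_bound:
  fixes K q R :: real
  shows "(K - 1) * (K * q + R) / 2 - K^2 / 8 \<le> (K * q * (K - 1) + R * (R - 1)) / 2"
proof -
  have "(K * q * (K - 1) + R * (R - 1)) / 2 - ((K - 1) * (K * q + R) / 2 - K^2 / 8) = (2 * R - K)^2 / 8"
    by (simp add: power2_eq_square field_simps)
  then show ?thesis by (smt (verit) zero_le_power2 divide_nonneg_pos)
qed

lemma clique_blocks_lower_bound:
  assumes n: "2 \<le> n"
  shows "(real n - 2) * real p / 2 - (real n - 1)^2 / 8 \<le> real (card (clique_blocks (n - 1) p))"
proof -
  define k where "k = n - 1"
  define q where "q = p div k"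
  define r where "r = p mod k"
  have k: "0 < k" "real k = real n - 1" unfolding k_def using n by auto
  have p: "real p = real k * real q + real r"
    unfolding q_def r_def by (metis mult_div_mod_eq of_nat_add of_nat_mult)
  have "2 * card (clique_blocks k p) = k * q * (k - 1) + r * (r - 1)"
    unfolding q_def r_def using card_clique_blocks[OF k(1)] .
  then have "real (card (clique_blocks k p)) = (real k * real q * (real k - 1) + real r * (real r - 1)) / 2"
  proof -
    have "real (r * (r - 1)) = real r * (real r - 1)" by (cases r) (simp_all add: algebra_simps)
    moreover have "real (k - 1) = real k - 1" using k(1) by simp
    ultimately show ?thesis using \<open>2 * card (clique_blocks k p) = _\<close>
      by (metis (mono_tags) of_nat_add of_nat_mult of_nat_numeral nonzero_mult_div_cancel_left zero_neq_numeral)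
  qed
  moreover have "(real n - 2) * real p / 2 - (real n - 1)^2 / 8
      = (real k - 1) * (real k * real q + real r) / 2 - (real k)^2 / 8"
    unfolding p k(2) by (simp add: field_simps)
  ultimately have "(real n - 2) * real p / 2 - (real n - 1)^2 / 8 \<le> real (card (clique_blocks k p))"
    using block_count_lower_bound[of "real k" "real q" "real r"] by linarith
  then show ?thesis unfolding k_def .
qed

text \<open>\<open>ex(p; L)\<close> is attained and bounds every \<open>L\<close>-free graph on \<open>{0..<p}\<close>, provided at
  least one such graph exists (so that the maximum is over a nonempty finite set).\<close>
lemma ex_num_attained:
  assumes "simple_graph_on {0..<p} E0" "\<not> contains_graph {0..<p} E0 k LE"
  shows "card E0 \<le> ex_num p k LE"
    and "\<exists>E. simple_graph_on {0..<p} E \<and> \<not> contains_graph {0..<p} E k LE \<and> ex_num p k LE = card E"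
proof -
  let ?S = "{card E | E. simple_graph_on {0..<p} E \<and> \<not> contains_graph {0..<p} E k LE}"
  have "?S \<subseteq> card ` Pow (Pow {0..<p})" unfolding simple_graph_on_def by auto
  then have fin: "finite ?S" by (rule finite_subset) simp
  have mem: "card E0 \<in> ?S" using assms by blast
  show "card E0 \<le> ex_num p k LE" unfolding ex_num_def using Max_ge[OF fin mem] .
  have "Max ?S \<in> ?S" using Max_in[OF fin] mem by blast
  then show "\<exists>E. simple_graph_on {0..<p} E \<and> \<not> contains_graph {0..<p} E k LE \<and> ex_num p k LE = card E"
    unfolding ex_num_def by auto
qed

theorem corollary2p1:
  fixes p n :: nat
  assumes "5 \<le> n" and "n \<le> p" and "\<not> (n - 1) dvd p"
  shows "(real n - 2) * real p / 2 - (real n - 1)^2 / 8 \<le> real (ex_num p n (T1_edges n))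
       \<and> real (ex_num p n (T1_edges n)) \<le> (real n - 2) * (real p - 1) / 2"
proof
  note blocks = clique_blocks_simple_graph clique_blocks_free[OF assms(1)]
  show "(real n - 2) * real p / 2 - (real n - 1)^2 / 8 \<le> real (ex_num p n (T1_edges n))"
  proof -
    have "real (card (clique_blocks (n - 1) p)) \<le> real (ex_num p n (T1_edges n))"
      using ex_num_attained(1)[OF blocks] by simp
    then show ?thesis using clique_blocks_lower_bound[of n p] assms(1) by linarith
  qed
  obtain E where E: "simple_graph_on {0..<p} E" "\<not> contains_graph {0..<p} E n (T1_edges n)"
      and ex: "ex_num p n (T1_edges n) = card E"
    using ex_num_attained(2)[OF blocks] by blast
  have "2 * card E + (n - 2) \<le> (n - 2) * p"
    using T1_free_bound[OF assms(1) E] assms(3) unfolding T1_bound_def by simp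
  then have "real (2 * card E + (n - 2)) \<le> real ((n - 2) * p)" by (simp only: of_nat_le_iff)
  moreover have "real (n - 2) = real n - 2" using assms(1) by simp
  ultimately have "2 * real (card E) + (real n - 2) \<le> (real n - 2) * real p" by simp
  then show "real (ex_num p n (T1_edges n)) \<le> (real n - 2) * (real p - 1) / 2"
    unfolding ex by (simp add: algebra_simps)
qed

end
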